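(* Let $P$ be a finite poset. Then $|\Delta_{\mathcal O(P)}\setminus\Delta^{*}_{\mathcal O(P)}|=|\Delta_{\mathcal C(P)}\setminus\Delta^{*}_{\mathcal C(P)}|$.
   Context: For a finite poset $P=\{p_1,\dots,p_d\}$ and $W\subset P$ put $\rho(W)=\sum_{p_i\in W}\mathbf e_i\in\mathbb R^d$ ($\rho(\emptyset)=0$). The order polytope is $\mathcal O(P)=\{x\in\mathbb R^d: 0\le x_i\le 1 \text{ for all } i,\ x_i\ge x_j \text{ if } p_i\le p_j\}$ and the chain polytope is $\mathcal C(P)=\{x\in\mathbb R^d: x_i\ge 0 \text{ for all } i,\ x_{i_1}+\dots+x_{i_k}\le 1 \text{ if } p_{i_1}<\dots<p_{i_k}\}$; the vertices of $\mathcal O(P)$ are the $\rho(I)$ for poset ideals $I$ and those of $\mathcal C(P)$ are the $\rho(A)$ for antichains $A$ (both including $\emptyset$). For a poset ideal $I$, $\max(I)$ is its set of maximal elements; for an antichain $A$, $\langle A\rangle=\{x: x\le p \text{ for some } p\in A\}$. $E^{*}_{\mathcal O(P)}$ is the set of pairs $\{I,J\}$ of distinct poset ideals such that $\mathrm{conv}\{\rho(I),\rho(J)\}$ is an edge of $\mathcal O(P)$ but $\mathrm{conv}\{\rho(\max I),\rho(\max J)\}$ is not an edge of $\mathcal C(P)$. $E^{*}_{\mathcal C(P)}$ is the set of pairs $\{A,B\}$ of distinct antichains such that $\mathrm{conv}\{\rho(A),\rho(B)\}$ is an edge of $\mathcal C(P)$ but $\mathrm{conv}\{\rho(\langle A\rangle),\rho(\langle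 B\rangle)\}$ is not an edge of $\mathcal O(P)$. $\Delta_{\mathcal O(P)}$ is the set of triples $\{I,J,K\}$ of pairwise distinct poset ideals such that $\mathrm{conv}\{\rho(I),\rho(J),\rho(K)\}$ is a 2-face of $\mathcal O(P)$; $\Delta_{\mathcal C(P)}$ is the set of triples $\{A,B,C\}$ of pairwise distinct antichains such that $\mathrm{conv}\{\rho(A),\rho(B),\rho(C)\}$ is a 2-face of $\mathcal C(P)$. $\Delta^{*}_{\mathcal O(P)}$ consists of those $\{I,J,K\}\in\Delta_{\mathcal O(P)}$ for which at least one of $\{I,J\},\{J,K\},\{I,K\}$ lies in $E^{*}_{\mathcal O(P)}$; $\Delta^{*}_{\mathcal C(P)}$ consists of those $\{A,B,C\}\in\Delta_{\mathcal C(P)}$ for which at least one of $\{A,B\},\{B,C\},\{A,C\}$ lies in $E^{*}_{\mathcal C(P)}$. *)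

theory Defs
  imports "HOL-Analysis.Analysis"
begin

text \<open>A finite poset P is modelled by a finite type 'a with a partial order;
  R^d with coordinates indexed by the elements of P is real^'a.\<close>

definition rho :: "'a::finite set \<Rightarrow> real^'a" where
  "rho W = (\<chi> i. if i \<in> W then 1 else 0)"

definition poset_ideal :: "'a::order set \<Rightarrow> bool" where
  "poset_ideal I \<longleftrightarrow> (\<forall>x y. x \<le> y \<longrightarrow> y \<in> I \<longrightarrow> x \<in> I)"

definition antichain :: "'a::order set \<Rightarrow> bool" where
  "antichain A \<longleftrightarrow> (\<forall>x\<in>A. \<forall>y\<in>A. x \<le> y \<longrightarrow> x = y)"

definition chain_set :: "'a::order set \<Rightarrow> bool" where
  "chain_set C \<longleftrightarrow> (\<forall>x\<in>C. \<forall>y\<in>C. x \<le> y \<or> y \<le> x)"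

definition order_polytope :: "(real^'a::{finite,order}) set" where
  "order_polytope = {x. (\<forall>i. 0 \<le> x$i \<and> x$i \<le> 1) \<and> (\<forall>i j. i \<le> j \<longrightarrow> x$j \<le> x$i)}"

definition chain_polytope :: "(real^'a::{finite,order}) set" where
  "chain_polytope = {x. (\<forall>i. 0 \<le> x$i) \<and>
      (\<forall>C. C \<noteq> {} \<and> chain_set C \<longrightarrow> (\<Sum>i\<in>C. x$i) \<le> 1)}"

definition maxel :: "'a::order set \<Rightarrow> 'a set" where
  "maxel I = {x\<in>I. \<forall>y\<in>I. x \<le> y \<longrightarrow> x = y}"

definition downset :: "'a::order set \<Rightarrow> 'a set" where
  "downset A = {x. \<exists>p\<in>A. x \<le> p}"

definition is_edge :: "(real^'n) set \<Rightarrow> real^'n \<Rightarrow> real^'n \<Rightarrow> bool" where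
  "is_edge S a b \<longleftrightarrow> convex hull {a, b} face_of S \<and> aff_dim (convex hull {a, b}) = 1"

definition is_2face :: "(real^'n) set \<Rightarrow> real^'n \<Rightarrow> real^'n \<Rightarrow> real^'n \<Rightarrow> bool" where
  "is_2face S a b c \<longleftrightarrow> convex hull {a, b, c} face_of S \<and> aff_dim (convex hull {a, b, c}) = 2"

definition EO_star :: "('a::{finite,order}) set set set" where
  "EO_star = {{I, J} | I J. poset_ideal I \<and> poset_ideal J \<and> I \<noteq> J \<and>
      is_edge (order_polytope :: (real^'a::{finite,order}) set) (rho I) (rho J) \<and>
      \<not> is_edge (chain_polytope :: (real^'a::{finite,order}) set) (rho (maxel I)) (rho (maxel J))}"

definition EC_star :: "'a::{finite,order} set set set" where
  "EC_star = {{A, B} | A B. antichain A \<and> antichain B \<and> A \<noteq> B \<and>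
      is_edge (chain_polytope :: (real^'a::{finite,order}) set) (rho A) (rho B) \<and>
      \<not> is_edge (order_polytope :: (real^'a::{finite,order}) set) (rho (downset A)) (rho (downset B))}"

definition DeltaO :: "'a::{finite,order} set set set" where
  "DeltaO = {{I, J, K} | I J K. poset_ideal I \<and> poset_ideal J \<and> poset_ideal K \<and>
      I \<noteq> J \<and> J \<noteq> K \<and> I \<noteq> K \<and>
      is_2face (order_polytope :: (real^'a::{finite,order}) set) (rho I) (rho J) (rho K)}"

definition DeltaC :: "'a::{finite,order} set set set" where
  "DeltaC = {{A, B, C} | A B C. antichain A \<and> antichain B \<and> antichain C \<and>
      A \<noteq> B \<and> B \<noteq> C \<and> A \<noteq> C \<and>
      is_2face (chain_polytope :: (real^'a::{finite,order}) set) (rho A) (rho B) (rho C)}"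

definition DeltaO_star :: "'a::{finite,order} set set set" where
  "DeltaO_star = {T \<in> DeltaO. \<exists>I J. I \<in> T \<and> J \<in> T \<and> I \<noteq> J \<and> {I, J} \<in> EO_star}"

definition DeltaC_star :: "'a::{finite,order} set set set" where
  "DeltaC_star = {T \<in> DeltaC. \<exists>A B. A \<in> T \<and> B \<in> T \<and> A \<noteq> B \<and> {A, B} \<in> EC_star}"

end

theory Submission
  imports Defs
begin

text \<open>The map \<open>T \<mapsto> maxel ` T\<close> is a bijection with inverse \<open>T \<mapsto> downset ` T\<close>.
  For a triangle outside the starred sets, its sides and their images are edges. Edges of the
  order polytope join nested ideals \<open>I \<subset> J\<close> with \<open>J - I\<close> connected in the comparability graph,
  and edges of the chain polytope join antichains whose symmetric difference is connected. Hence
  both kinds of triangles come from chains of ideals \<open>I \<subset> J \<subset> K\<close> whose differences, and the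
  symmetric differences of whose antichains of maximal elements, are all connected. Conversely,
  such a chain spans a 2-face of either polytope: a point of the polytope on an open segment
  through the triangle satisfies every constraint that is tight on the triangle, and
  propagating these equalities along comparable pairs in the connected sets forces it into
  the triangle.\<close>

lemma rho_nth [simp]: "rho W $ i = (if i \<in> W then 1 else 0)"
  by (simp add: rho_def)

lemma rho_eq_iff [simp]: "rho X = rho Y \<longleftrightarrow> X = Y"
  by (auto simp: vec_eq_iff split: if_splits)

lemma rho_in_affine_hull_2:
  assumes "rho X \<in> affine hull {rho Y, rho Z}"
  shows "X = Y \<or> X = Z"
proof -
  obtain u v where "u + v = 1" and X: "rho X = u *\<^sub>R rho Y + v *\<^sub>R rho Z"
    using assms by (auto simp: affine_hull_2)
  have coord: "(if i \<in> X then 1 else 0) =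
      u * (if i \<in> Y then 1 else 0) + v * (if i \<in> Z then 1 else (0::real))" for i
    using arg_cong[OF X, of "\<lambda>x. x $ i"] by simp
  show ?thesis
  proof (cases "Y = Z")
    case True
    then have "rho X = rho Y" using X \<open>u + v = 1\<close> by (simp flip: scaleR_add_left)
    then show ?thesis by simp
  next
    case False
    then obtain i where "i \<in> Y \<and> i \<notin> Z \<or> i \<in> Z \<and> i \<notin> Y" by blast
    then have "u = 0 \<and> v = 1 \<or> u = 1 \<and> v = 0"
      using coord[of i] \<open>u + v = 1\<close> by (auto split: if_splits)
    then show ?thesis using X by auto
  qed
qed

lemma rho_in_closed_segment:
  "rho X \<in> closed_segment (rho Y) (rho Z) \<Longrightarrow> X = Y \<or> X = Z"
  by (metis rho_in_affine_hull_2 convex_hull_subset_affine_hull segment_convex_hull subsetD)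

lemma rho_affine_independent:
  assumes "X \<noteq> Y" "X \<noteq> Z" "Y \<noteq> Z"
  shows "\<not> affine_dependent {rho X, rho Y, rho Z}"
proof
  assume "affine_dependent {rho X, rho Y, rho Z}"
  then have "collinear {rho X, rho Y, rho Z}" by (rule affine_dependent_imp_collinear_3)
  then have "rho Z \<in> affine hull {rho X, rho Y}"
    using assms(1) collinear_3_affine_hull by (metis rho_eq_iff)
  then show False using assms(2,3) rho_in_affine_hull_2 by blast
qed

lemma is_2face_rhoI:
  assumes "X \<noteq> Y" "X \<noteq> Z" "Y \<noteq> Z" "convex hull {rho X, rho Y, rho Z} face_of S"
  shows "is_2face S (rho X) (rho Y) (rho Z)"
proof -
  have "card {rho X, rho Y, rho Z} = 3" using assms by auto
  then show ?thesis
    using assms rho_affine_independent[OF assms(1-3)]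
    by (simp add: is_2face_def aff_dim_convex_hull affine_independent_iff_card)
qed

lemma is_2face_rho_edge:
  assumes "X \<noteq> Y" "X \<noteq> Z" "Y \<noteq> Z" "is_2face S (rho X) (rho Y) (rho Z)"
    and "U \<in> {X, Y, Z}" "V \<in> {X, Y, Z}" "U \<noteq> V"
  shows "is_edge S (rho U) (rho V)"
proof -
  have "{rho U, rho V} \<subseteq> {rho X, rho Y, rho Z}" using assms(5,6) by auto
  then have "convex hull {rho U, rho V} face_of convex hull {rho X, rho Y, rho Z}"
    unfolding face_of_convex_hull_affine_independent[OF rho_affine_independent[OF assms(1-3)]]
    by blast
  then have "convex hull {rho U, rho V} face_of S"
    using assms(4) face_of_trans unfolding is_2face_def by blast
  then show ?thesis
    using \<open>U \<noteq> V\<close> by (simp add: is_edge_def aff_dim_convex_hull)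
qed

lemma face_ofI_open_segment:
  assumes "T \<subseteq> S" "convex T"
    and "\<And>a b x. a \<in> S \<Longrightarrow> b \<in> S \<Longrightarrow> x \<in> T \<Longrightarrow> x \<in> open_segment a b \<Longrightarrow> a \<in> T"
  shows "T face_of S"
  unfolding face_of_def using assms by (metis open_segment_commute)

lemma segment_not_face_of:
  assumes "a \<in> S" "b \<in> S" "c \<in> S" "d \<in> S" "a + b = c + d" "c \<notin> closed_segment a b"
  shows "\<not> convex hull {a, b} face_of S"
proof
  assume face: "convex hull {a, b} face_of S"
  have mid: "midpoint c d = midpoint a b" using assms(5) by (simp add: midpoint_def)
  then have "c \<noteq> d" using assms(6) midpoint_in_closed_segment by (metis midpoint_idem)
  then have "midpoint a b \<in> open_segment c d" using mid by (metis midpoint_in_open_segment)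
  moreover have "midpoint a b \<in> convex hull {a, b}"
    by (metis midpoint_in_closed_segment segment_convex_hull)
  ultimately have "c \<in> convex hull {a, b}" using face_ofD[OF face _ assms(3,4)] by blast
  then show False using assms(6) by (simp add: segment_convex_hull)
qed

lemma convex_comb_at_upper_bound:
  fixes x y c t :: real
  assumes "0 < t" "t < 1" "x \<le> c" "y \<le> c" "(1 - t) * x + t * y = c"
  shows "x = c"
proof -
  have "(1 - t) * (c - x) + t * (c - y) = 0" using assms(5) by (simp add: algebra_simps)
  moreover have "0 \<le> (1 - t) * (c - x)" "0 \<le> t * (c - y)" using assms by simp_all
  ultimately have "(1 - t) * (c - x) = 0" by linarith
  then show ?thesis using assms(2) by simp
qed

lemma convex_comb_at_lower_bound:
  fixes x y c t :: real
  assumes "0 < t" "t < 1" "c \<le> x" "c \<le> y" "(1 - t) * x + t * y = c"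
  shows "x = c"
  using convex_comb_at_upper_bound[of t "-x" "-c" "-y"] assms by simp

lemma antichain_Diff: "antichain A \<Longrightarrow> antichain (A - B)"
  unfolding antichain_def by blast

lemma antichain_maxel: "antichain (maxel I)"
  unfolding antichain_def maxel_def by blast

lemma poset_ideal_downset: "poset_ideal (downset A)"
  unfolding poset_ideal_def downset_def using order_trans by blast

lemma downset_maxel:
  fixes I :: "'a::{finite,order} set"
  assumes "poset_ideal I"
  shows "downset (maxel I) = I"
proof
  show "downset (maxel I) \<subseteq> I"
    using assms unfolding downset_def maxel_def poset_ideal_def by blast
  show "I \<subseteq> downset (maxel I)"
  proof
    fix x assume "x \<in> I"
    then obtain m where "m \<in> I" "x \<le> m" "\<forall>y\<in>I. m \<le> y \<longrightarrow> m = y"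
      using finite_has_maximal2[OF finite] by blast
    then show "x \<in> downset (maxel I)" unfolding downset_def maxel_def by blast
  qed
qed

lemma maxel_downset:
  assumes "antichain A"
  shows "maxel (downset A) = A"
proof (intro equalityI subsetI)
  fix x assume "x \<in> maxel (downset A)"
  then obtain p where "p \<in> A" "x \<le> p" "\<forall>y\<in>downset A. x \<le> y \<longrightarrow> x = y"
    unfolding maxel_def downset_def by blast
  moreover have "p \<in> downset A" using \<open>p \<in> A\<close> unfolding downset_def by blast
  ultimately show "x \<in> A" by metis
next
  fix p assume "p \<in> A"
  have "y = p" if y: "y \<in> downset A" "p \<le> y" for y
  proof -
    obtain q where "q \<in> A" "y \<le> q" using y(1) unfolding downset_def by blast
    then have "p = q" using assms \<open>p \<in> A\<close> y(2) order_trans unfolding antichain_def by metis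
    then show ?thesis using y(2) \<open>y \<le> q\<close> by simp
  qed
  then show "p \<in> maxel (downset A)" using \<open>p \<in> A\<close> unfolding maxel_def downset_def by auto
qed

lemma downset_subset_comparable_le:
  assumes "downset A \<subseteq> downset B" "antichain B" "a \<in> A" "b \<in> B" "a \<le> b \<or> b \<le> a"
  shows "a \<le> b"
proof -
  obtain b' where "b' \<in> B" "a \<le> b'"
    using assms(1,3) unfolding downset_def by blast
  then show ?thesis
    using assms(2,4,5) unfolding antichain_def by (metis order_trans)
qed

definition comparability_connected :: "'a::order set \<Rightarrow> bool" where
  "comparability_connected S \<longleftrightarrow>
     (\<forall>X \<subseteq> S. X \<noteq> {} \<longrightarrow> (\<forall>u\<in>X. \<forall>v\<in>S. u \<le> v \<or> v \<le> u \<longrightarrow> v \<in> X) \<longrightarrow> X = S)"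

lemma comparability_connected_exit:
  assumes "comparability_connected S" "X \<subseteq> S" "x \<in> X" "X \<noteq> S"
  obtains u v where "u \<in> X" "v \<in> S - X" "u \<le> v \<or> v \<le> u"
  using assms unfolding comparability_connected_def by blast

lemma comparability_connected_const:
  assumes "comparability_connected S" "\<And>u v. u \<in> S \<Longrightarrow> v \<in> S \<Longrightarrow> u \<le> v \<Longrightarrow> g u = g v"
    and "x \<in> S" "y \<in> S"
  shows "g x = g y"
proof -
  have "{v \<in> S. g v = g x} = S"
  proof (rule ccontr)
    assume ne: "{v \<in> S. g v = g x} \<noteq> S"
    obtain u w where "u \<in> {v \<in> S. g v = g x}" "w \<in> S - {v \<in> S. g v = g x}" "u \<le> w \<or> w \<le> u"
      by (rule comparability_connected_exit[OF assms(1) _ _ ne]) (use assms(3) in auto)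
    then show False using assms(2)[of u w] assms(2)[of w u] by auto
  qed
  then show ?thesis using assms(4) by (metis (mono_tags, lifting) mem_Collect_eq)
qed

lemma comparability_connected_balance:
  fixes g h :: "'a::order \<Rightarrow> real"
  assumes "comparability_connected (U \<union> V)" "antichain U" "antichain V"
    and "\<And>u v. u \<in> U \<Longrightarrow> v \<in> V \<Longrightarrow> u \<le> v \<or> v \<le> u \<Longrightarrow> g u + h v = 1"
  shows "\<exists>\<kappa>. (\<forall>u\<in>U. g u = \<kappa>) \<and> (\<forall>v\<in>V. h v = 1 - \<kappa>)"
proof -
  define \<phi> where "\<phi> x = (if x \<in> U then g x else 1 - h x)" for x
  have h: "h v = 1 - \<phi> v" if "v \<in> V" for v
  proof (cases "v \<in> U")
    case True
    then have "g v + h v = 1" using assms(4) that by blast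
    then show ?thesis using True unfolding \<phi>_def by simp
  qed (simp add: \<phi>_def)
  have "\<phi> u = \<phi> v" if "u \<in> U \<union> V" "v \<in> U \<union> V" "u \<le> v" for u v
  proof (cases "u \<in> U \<longleftrightarrow> v \<in> U")
    case True
    then have "u = v" using that assms(2,3) unfolding antichain_def by blast
    then show ?thesis by simp
  next
    case False
    then show ?thesis
      using that assms(4)[of u v] assms(4)[of v u] unfolding \<phi>_def by (cases "u \<in> U") auto
  qed
  then have const: "\<phi> x = \<phi> s" if "x \<in> U \<union> V" "s \<in> U \<union> V" for x s
    using comparability_connected_const[OF assms(1)] that by blast
  show ?thesis
  proof (cases "U \<union> V = {}")
    case False
    then obtain s where s: "s \<in> U \<union> V" by blast
    have "g u = \<phi> s" if "u \<in> U" for u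
      using const[OF _ s, of u] that unfolding \<phi>_def by simp
    moreover have "h v = 1 - \<phi> s" if "v \<in> V" for v
      using const[OF _ s, of v] h[OF that] that by simp
    ultimately show ?thesis by blast
  qed simp
qed

lemma card_chain_Int_antichain:
  fixes C A :: "'a::{finite,order} set"
  assumes "chain_set C" "antichain A"
  shows "card (C \<inter> A) \<le> 1"
  using assms unfolding chain_set_def antichain_def by (auto simp: card_le_Suc0_iff_eq)

lemma rho_in_order_polytope: "poset_ideal I \<Longrightarrow> rho I \<in> order_polytope"
  unfolding order_polytope_def poset_ideal_def by auto

lemma rho_in_chain_polytope:
  fixes A :: "'a::{finite,order} set"
  assumes "antichain A"
  shows "rho A \<in> chain_polytope"
  using card_chain_Int_antichain[OF _ assms] unfolding chain_polytope_def
  by (simp add: sum.If_cases)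

lemma convex_order_polytope: "convex order_polytope"
  unfolding convex_def order_polytope_def
  by (auto intro!: convex_bound_le add_mono mult_left_mono)

lemma convex_chain_polytope: "convex chain_polytope"
proof (rule convexI)
  fix x y :: "real^'a::{finite,order}" and u v :: real
  assume "x \<in> chain_polytope" "y \<in> chain_polytope" "0 \<le> u" "0 \<le> v" "u + v = 1"
  moreover have "(\<Sum>i\<in>Q. (u *\<^sub>R x + v *\<^sub>R y) $ i) = u * (\<Sum>i\<in>Q. x $ i) + v * (\<Sum>i\<in>Q. y $ i)" for Q
    by (simp add: sum.distrib sum_distrib_left)
  ultimately show "u *\<^sub>R x + v *\<^sub>R y \<in> chain_polytope"
    unfolding chain_polytope_def by (simp add: convex_bound_le)
qed

lemma order_polytope_open_segment_tight:
  fixes a b z :: "real^'a::{finite,order}"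
  assumes "a \<in> order_polytope" "b \<in> order_polytope" "z \<in> open_segment a b"
  shows "z $ i = 1 \<Longrightarrow> a $ i = 1" and "z $ i = 0 \<Longrightarrow> a $ i = 0"
    and "i \<le> j \<Longrightarrow> z $ i = z $ j \<Longrightarrow> a $ i = a $ j"
proof -
  obtain t where t: "0 < t" "t < 1" and zt: "z = (1 - t) *\<^sub>R a + t *\<^sub>R b"
    using assms(3) unfolding in_segment by blast
  have tight: "(1 - t) * a $ k + t * b $ k = z $ k" for k
    by (simp add: zt)
  have bounds: "0 \<le> x $ k" "x $ k \<le> 1" "k \<le> l \<Longrightarrow> x $ l \<le> x $ k"
    if "x \<in> order_polytope" for x k l
    using that unfolding order_polytope_def by auto
  show "a $ i = 1" if "z $ i = 1"
    using convex_comb_at_upper_bound[OF t bounds(2)[OF assms(1)] bounds(2)[OF assms(2)]]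
      tight[of i] that by simp
  show "a $ i = 0" if "z $ i = 0"
    using convex_comb_at_lower_bound[OF t bounds(1)[OF assms(1)] bounds(1)[OF assms(2)]]
      tight[of i] that by simp
  show "a $ i = a $ j" if "i \<le> j" "z $ i = z $ j"
    using convex_comb_at_upper_bound[OF t, of "a $ j - a $ i" 0 "b $ j - b $ i"]
      bounds(3)[OF assms(1) that(1)] bounds(3)[OF assms(2) that(1)] tight[of i] tight[of j] that(2)
    by (simp add: algebra_simps)
qed

lemma chain_polytope_open_segment_tight:
  fixes a b z :: "real^'a::{finite,order}"
  assumes "a \<in> chain_polytope" "b \<in> chain_polytope" "z \<in> open_segment a b"
  shows "z $ i = 0 \<Longrightarrow> a $ i = 0"
    and "chain_set Q \<Longrightarrow> Q \<noteq> {} \<Longrightarrow> (\<Sum>i\<in>Q. z $ i) = 1 \<Longrightarrow> (\<Sum>i\<in>Q. a $ i) = 1"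
proof -
  obtain t where t: "0 < t" "t < 1" and zt: "z = (1 - t) *\<^sub>R a + t *\<^sub>R b"
    using assms(3) unfolding in_segment by blast
  have tight: "(1 - t) * (\<Sum>i\<in>P. a $ i) + t * (\<Sum>i\<in>P. b $ i) = (\<Sum>i\<in>P. z $ i)" for P
    by (simp add: zt sum.distrib sum_distrib_left)
  have bounds: "0 \<le> x $ k" "chain_set P \<Longrightarrow> P \<noteq> {} \<Longrightarrow> (\<Sum>i\<in>P. x $ i) \<le> 1"
    if "x \<in> chain_polytope" for x k P
    using that unfolding chain_polytope_def by auto
  show "a $ i = 0" if "z $ i = 0"
    using convex_comb_at_lower_bound[OF t bounds(1)[OF assms(1)] bounds(1)[OF assms(2)]]
      tight[of "{i}"] that by simp
  show "(\<Sum>i\<in>Q. a $ i) = 1" if "chain_set Q" "Q \<noteq> {}" "(\<Sum>i\<in>Q. z $ i) = 1"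
    using convex_comb_at_upper_bound[OF t bounds(2)[OF assms(1) that(1,2)]
        bounds(2)[OF assms(2) that(1,2)]] tight[of Q] that(3)
    by simp
qed

lemma order_polytope_segment_face_nested:
  fixes I J :: "'a::{finite,order} set"
  assumes "poset_ideal I" "poset_ideal J" "convex hull {rho I, rho J} face_of order_polytope"
  shows "I \<subseteq> J \<or> J \<subseteq> I"
proof (rule ccontr)
  assume "\<not> (I \<subseteq> J \<or> J \<subseteq> I)"
  then have "rho (I \<inter> J) \<notin> closed_segment (rho I) (rho J)"
    using rho_in_closed_segment by blast
  moreover have "poset_ideal (I \<inter> J)" "poset_ideal (I \<union> J)"
    using assms(1,2) unfolding poset_ideal_def by blast+
  moreover have "rho I + rho J = rho (I \<inter> J) + rho (I \<union> J)" by (simp add: vec_eq_iff)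
  ultimately show False
    using segment_not_face_of[of "rho I" order_polytope "rho J" "rho (I \<inter> J)" "rho (I \<union> J)"]
      assms by (simp add: rho_in_order_polytope)
qed

lemma order_polytope_segment_face_connected:
  fixes I J :: "'a::{finite,order} set"
  assumes "poset_ideal I" "poset_ideal J" "I \<subseteq> J"
    and "convex hull {rho I, rho J} face_of order_polytope"
  shows "comparability_connected (J - I)"
  unfolding comparability_connected_def
proof (intro allI impI, rule ccontr)
  fix X assume X: "X \<subseteq> J - I" "X \<noteq> {}" "\<forall>u\<in>X. \<forall>v\<in>J - I. u \<le> v \<or> v \<le> u \<longrightarrow> v \<in> X"
    and "X \<noteq> J - I"
  then have "rho (I \<union> X) \<notin> closed_segment (rho I) (rho J)"
    using rho_in_closed_segment by blast
  moreover have "poset_ideal (I \<union> X)" "poset_ideal (J - X)"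
    using assms(1,2) X(1,3) unfolding poset_ideal_def by blast+
  moreover have "rho I + rho J = rho (I \<union> X) + rho (J - X)"
    using X(1) assms(3) by (auto simp: vec_eq_iff)
  ultimately show False
    using segment_not_face_of[of "rho I" order_polytope "rho J" "rho (I \<union> X)" "rho (J - X)"]
      assms by (simp add: rho_in_order_polytope)
qed

lemma order_polytope_edge_nested:
  fixes I J :: "'a::{finite,order} set"
  assumes "poset_ideal I" "poset_ideal J" "is_edge order_polytope (rho I) (rho J)"
  shows "I \<subseteq> J \<and> comparability_connected (J - I) \<or> J \<subseteq> I \<and> comparability_connected (I - J)"
proof -
  have face: "convex hull {rho I, rho J} face_of order_polytope"
    "convex hull {rho J, rho I} face_of order_polytope"
    using assms(3) unfolding is_edge_def by (simp_all add: insert_commute)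
  then show ?thesis
    using order_polytope_segment_face_nested order_polytope_segment_face_connected assms(1,2)
    by metis
qed

lemma antichain_swap:
  assumes "antichain A" "antichain B" "X \<subseteq> (A - B) \<union> (B - A)"
    and "\<forall>u\<in>X. \<forall>v\<in>(A - B) \<union> (B - A). u \<le> v \<or> v \<le> u \<longrightarrow> v \<in> X"
  shows "antichain ((A - X) \<union> (B \<inter> X))"
  using assms unfolding antichain_def by blast

lemma chain_polytope_edge_connected:
  fixes A B :: "'a::{finite,order} set"
  assumes "antichain A" "antichain B"
    and "is_edge chain_polytope (rho A) (rho B)"
  shows "comparability_connected ((A - B) \<union> (B - A))"
  unfolding comparability_connected_def
proof (intro allI impI, rule ccontr)
  fix X assume X: "X \<subseteq> (A - B) \<union> (B - A)" "X \<noteq> {}"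
    "\<forall>u\<in>X. \<forall>v\<in>(A - B) \<union> (B - A). u \<le> v \<or> v \<le> u \<longrightarrow> v \<in> X"
    and "X \<noteq> (A - B) \<union> (B - A)"
  then have "rho ((A - X) \<union> (B \<inter> X)) \<notin> closed_segment (rho A) (rho B)"
    using rho_in_closed_segment by blast
  moreover have "antichain ((A - X) \<union> (B \<inter> X))" "antichain ((B - X) \<union> (A \<inter> X))"
    using antichain_swap[OF assms(1,2) X(1,3)] antichain_swap[OF assms(2,1), of X] X(1,3)
    by (simp_all add: Un_commute)
  moreover have "rho A + rho B = rho ((A - X) \<union> (B \<inter> X)) + rho ((B - X) \<union> (A \<inter> X))"
    using X(1) by (auto simp: vec_eq_iff)
  ultimately show False
    using segment_not_face_of[of "rho A" chain_polytope "rho B" "rho ((A - X) \<union> (B \<inter> X))"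
        "rho ((B - X) \<union> (A \<inter> X))"]
      assms by (simp add: rho_in_chain_polytope is_edge_def)
qed

lemma nested_ideals_crossing_le:
  assumes "poset_ideal J" "I \<subset> J" "J \<subset> K" "comparability_connected (K - I)"
  obtains p q where "p \<in> J - I" "q \<in> K - J" "p \<le> q"
proof -
  obtain x where "x \<in> J - I" using assms(2) by blast
  moreover have "J - I \<subseteq> K - I" "J - I \<noteq> K - I" using assms(2,3) by blast+
  ultimately obtain p q where pq: "p \<in> J - I" "q \<in> (K - I) - (J - I)" "p \<le> q \<or> q \<le> p"
    using comparability_connected_exit[OF assms(4)] by metis
  then have "\<not> q \<le> p" using assms(1) unfolding poset_ideal_def by blast
  then show ?thesis using that pq by blast
qed

lemma convex_hull_3I:
  assumes "0 \<le> u" "0 \<le> v" "0 \<le> w" "u + v + w = 1"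
  shows "u *\<^sub>R a + v *\<^sub>R b + w *\<^sub>R c \<in> convex hull {a, b, c}"
  unfolding convex_hull_3 using assms by blast

lemma order_polytope_in_triangle:
  assumes "a \<in> order_polytope" "I \<subseteq> J" "J \<subseteq> K" "p \<in> J - I" "q \<in> K - J" "p \<le> q"
    and "\<And>i. i \<in> I \<Longrightarrow> a $ i = 1" "\<And>i. i \<notin> K \<Longrightarrow> a $ i = 0"
    and "\<And>i. i \<in> J - I \<Longrightarrow> a $ i = a $ p" "\<And>i. i \<in> K - J \<Longrightarrow> a $ i = a $ q"
  shows "a \<in> convex hull {rho I, rho J, rho K}"
proof -
  define \<alpha> \<beta> where "\<alpha> = a $ p" and "\<beta> = a $ q"
  have "a = (1 - \<alpha>) *\<^sub>R rho I + (\<alpha> - \<beta>) *\<^sub>R rho J + \<beta> *\<^sub>R rho K"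
    unfolding vec_eq_iff
  proof
    fix i
    consider "i \<in> I" | "i \<in> J - I" | "i \<in> K - J" | "i \<notin> K" using assms(2,3) by blast
    then show "a $ i = ((1 - \<alpha>) *\<^sub>R rho I + (\<alpha> - \<beta>) *\<^sub>R rho J + \<beta> *\<^sub>R rho K) $ i"
      by cases (use assms(2,3) assms(7-10)[of i] in \<open>auto simp: \<alpha>_def \<beta>_def\<close>)
  qed
  moreover have "\<alpha> \<le> 1" "\<beta> \<le> \<alpha>" "0 \<le> \<beta>"
    using assms(1,6) unfolding order_polytope_def \<alpha>_def \<beta>_def by auto
  ultimately show ?thesis
    using convex_hull_3I[of "1 - \<alpha>" "\<alpha> - \<beta>" \<beta>] by simp
qed

lemma order_polytope_2face:
  fixes I J K :: "'a::{finite,order} set"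
  assumes ideals: "poset_ideal I" "poset_ideal J" "poset_ideal K"
    and "I \<subset> J" "J \<subset> K"
    and conn: "comparability_connected (J - I)" "comparability_connected (K - J)"
      "comparability_connected (K - I)"
  shows "is_2face order_polytope (rho I) (rho J) (rho K)"
proof -
  obtain p q where pq: "p \<in> J - I" "q \<in> K - J" "p \<le> q"
    using nested_ideals_crossing_le[OF ideals(2) assms(4,5) conn(3)] .
  have "convex hull {rho I, rho J, rho K} face_of order_polytope"
  proof (rule face_ofI_open_segment)
    show "convex hull {rho I, rho J, rho K} \<subseteq> order_polytope"
      using ideals by (intro hull_minimal) (auto simp: rho_in_order_polytope convex_order_polytope)
    fix a b z
    assume a: "a \<in> order_polytope" and b: "b \<in> order_polytope"
      and "z \<in> convex hull {rho I, rho J, rho K}" and segment: "z \<in> open_segment a b"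
    then obtain u v w where "u + v + w = 1" and z: "z = u *\<^sub>R rho I + v *\<^sub>R rho J + w *\<^sub>R rho K"
      unfolding convex_hull_3 by blast
    note tight = order_polytope_open_segment_tight[OF a b segment]
    have const: "a $ i = a $ j"
      if "comparability_connected S" "\<And>k. k \<in> S \<Longrightarrow> z $ k = z $ s" "i \<in> S" "j \<in> S" for S s i j
      using comparability_connected_const[OF that(1) _ that(3,4)] tight(3) that(2) by metis
    have "z $ i = z $ p" if "i \<in> J - I" for i
      using that pq assms(4,5) by (auto simp: z)
    moreover have "z $ i = z $ q" if "i \<in> K - J" for i
      using that pq assms(4,5) by (auto simp: z)
    moreover have "a $ i = 1" if "i \<in> I" for i
    proof (rule tight(1))
      show "z $ i = 1" using that assms(4,5) \<open>u + v + w = 1\<close> by (auto simp: z)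
    qed
    moreover have "a $ i = 0" if "i \<notin> K" for i
    proof (rule tight(2))
      show "z $ i = 0" using that assms(4,5) by (auto simp: z)
    qed
    ultimately show "a \<in> convex hull {rho I, rho J, rho K}"
      using order_polytope_in_triangle[OF a _ _ pq] const[OF conn(1) _ _ pq(1)]
        const[OF conn(2) _ _ pq(2)] assms(4,5) by blast
  qed simp
  then show ?thesis using assms(4,5) by (intro is_2face_rhoI) auto
qed

text \<open>The constraints of the chain polytope that are tight on the whole triangle with vertices
  \<open>rho A\<close>, \<open>rho B\<close>, \<open>rho C\<close>, imposed on a point \<open>f\<close>.\<close>

locale chain_triangle_tight =
  fixes A B C :: "'a::{finite,order} set" and f :: "'a \<Rightarrow> real"
  assumes antichains: "antichain A" "antichain B" "antichain C"
    and nested: "downset A \<subset> downset B" "downset B \<subset> downset C"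
    and connected: "comparability_connected ((A - B) \<union> (B - A))"
      "comparability_connected ((B - C) \<union> (C - B))"
      "comparability_connected ((A - C) \<union> (C - A))"
    and nonneg: "\<And>i. 0 \<le> f i"
    and chain_le: "\<And>Q. chain_set Q \<Longrightarrow> Q \<noteq> {} \<Longrightarrow> sum f Q \<le> 1"
    and chain_eq: "\<And>Q. chain_set Q \<Longrightarrow> Q \<inter> A \<noteq> {} \<Longrightarrow> Q \<inter> B \<noteq> {} \<Longrightarrow> Q \<inter> C \<noteq> {} \<Longrightarrow>
      sum f Q = 1"
    and support: "\<And>i. i \<notin> A \<union> B \<union> C \<Longrightarrow> f i = 0"
begin

lemma le_AB: "a \<in> A \<Longrightarrow> b \<in> B \<Longrightarrow> a \<le> b \<or> b \<le> a \<Longrightarrow> a \<le> b"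
  using downset_subset_comparable_le nested antichains by blast

lemma le_BC: "b \<in> B \<Longrightarrow> c \<in> C \<Longrightarrow> b \<le> c \<or> c \<le> b \<Longrightarrow> b \<le> c"
  using downset_subset_comparable_le nested antichains by blast

lemma le_AC: "a \<in> A \<Longrightarrow> c \<in> C \<Longrightarrow> a \<le> c \<or> c \<le> a \<Longrightarrow> a \<le> c"
  using downset_subset_comparable_le[of A C] nested antichains by blast

lemma above_B_in_C: "b \<in> B \<Longrightarrow> \<exists>c\<in>C. b \<le> c"
  using nested(2) unfolding downset_def by blast

lemma antichain_eq: "X \<in> {A, B, C} \<Longrightarrow> x \<in> X \<Longrightarrow> y \<in> X \<Longrightarrow> x \<le> y \<or> y \<le> x \<Longrightarrow> x = y"
  using antichains unfolding antichain_def by blast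

lemma A_Int_C_subset_B: "A \<inter> C \<subseteq> B"
proof
  fix x assume x: "x \<in> A \<inter> C"
  then obtain b where "b \<in> B" "x \<le> b" using nested(1) unfolding downset_def by blast
  then show "x \<in> B"
    using x le_BC antichain_eq[of C x] by (metis IntD2 insertI1 insertI2 order_antisym)
qed

lemma C_minus_B_nonempty: "C - B \<noteq> {}"
  using nested(2) unfolding downset_def by blast

lemma B_minus_A_nonempty: "B - A \<noteq> {}"
  using nested(1) unfolding downset_def by blast

lemma triple_sum: "p \<in> A \<Longrightarrow> q \<in> B \<Longrightarrow> r \<in> C \<Longrightarrow> p \<le> q \<Longrightarrow> q \<le> r \<Longrightarrow> sum f {p, q, r} = 1"
  by (rule chain_eq) (auto simp: chain_set_def intro: order_trans)

lemma pair_sum_le: "p \<le> q \<Longrightarrow> sum f {p, q} \<le> 1"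
  by (rule chain_le) (auto simp: chain_set_def)

lemma below_in_A_minus_B:
  assumes "A - B \<noteq> {}"
  shows "\<exists>r. \<forall>v\<in>B - A. r v \<in> A - B \<and> r v \<le> v"
proof -
  have "\<exists>r. r \<in> A - B \<and> r \<le> v" if v: "v \<in> B - A" for v
  proof -
    obtain a where "a \<in> A - B" using assms by blast
    then have "a \<in> (A - B) \<union> (B - A) - {v}" using v by auto
    then have "{v} \<subseteq> (A - B) \<union> (B - A)" "{v} \<noteq> (A - B) \<union> (B - A)"
      using v by auto
    then obtain u w where "u \<in> {v}" "w \<in> (A - B) \<union> (B - A) - {v}" "u \<le> w \<or> w \<le> u"
      by (rule comparability_connected_exit[OF connected(1) _ singletonI])
    moreover from this have "w \<notin> B - A"
      using antichain_eq[of B v w] v by auto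
    ultimately show ?thesis
      using le_AB[of w v] v by auto
  qed
  then show ?thesis by (rule bchoice[OF ballI])
qed

lemma constant_on_C_minus_B: "\<exists>\<gamma>. \<forall>c\<in>C - B. f c = \<gamma>"
proof (cases "A \<subseteq> B")
  case True
  have pair: "f c + f a = 1" if "c \<in> C - A" "a \<in> A - C" "c \<le> a \<or> a \<le> c" for c a
  proof -
    have "a \<noteq> c" using that by blast
    then show ?thesis
      using triple_sum[of a a c] le_AC[of a c] that True by (auto simp: insert_commute)
  qed
  have "comparability_connected ((C - A) \<union> (A - C))"
    using connected(3) by (simp add: Un_commute)
  then obtain \<gamma> where "\<forall>c\<in>C - A. f c = \<gamma>"
    using comparability_connected_balance[of "C - A" "A - C" f f,
        OF _ antichain_Diff antichain_Diff pair] antichains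
    by blast
  then show ?thesis using True by blast
next
  case False
  then obtain r where r: "\<forall>v\<in>B - A. r v \<in> A - B \<and> r v \<le> v"
    using below_in_A_minus_B by blast
  \<comment> \<open>\<open>h v\<close> completes \<open>f c\<close> to the sum over a chain through \<open>A\<close>, \<open>B\<close>, \<open>C\<close>: \<open>r v \<le> v \<le> c\<close>.\<close>
  define h where "h v = f v + (if v \<in> A then 0 else f (r v))" for v
  have pair: "f c + h v = 1" if "c \<in> C - B" "v \<in> B - C" "c \<le> v \<or> v \<le> c" for c v
  proof (cases "v \<in> A")
    case True
    moreover have "v \<noteq> c" using that by blast
    ultimately show ?thesis
      using triple_sum[of v v c] le_BC[of v c] that unfolding h_def by (auto simp: insert_commute)
  next
    case False
    then have rv: "r v \<in> A - B" "r v \<le> v" using r that(2) by auto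
    then have "r v \<noteq> c" "r v \<noteq> v" "v \<noteq> c" using that A_Int_C_subset_B by auto
    then show ?thesis
      using triple_sum[of "r v" v c] le_BC[of v c] rv False that
      unfolding h_def by (auto simp: insert_commute)
  qed
  have "comparability_connected ((C - B) \<union> (B - C))"
    using connected(2) by (simp add: Un_commute)
  then show ?thesis
    using comparability_connected_balance[of "C - B" "B - C" f h,
        OF _ antichain_Diff antichain_Diff pair] antichains
    by blast
qed

context
  fixes \<gamma> :: real
  assumes gamma: "\<And>c. c \<in> C - B \<Longrightarrow> f c = \<gamma>"
begin

lemma value_on_A_Int_B_minus_C:
  assumes "v \<in> A \<inter> B - C"
  shows "f v = 1 - \<gamma>"
proof -
  obtain c where c: "c \<in> C" "v \<le> c" using above_B_in_C assms by blast
  then have "c \<notin> B" "c \<noteq> v" using antichain_eq[of B v c] assms by auto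
  then show ?thesis
    using triple_sum[of v v c] gamma[of c] c assms by (auto simp: insert_commute)
qed

lemma constant_on_A_minus_B:
  obtains \<delta> where "\<And>a. a \<in> A - B \<Longrightarrow> f a = 1 - \<delta>"
    and "\<And>v. v \<in> B - A \<Longrightarrow> f v + (if v \<in> C then 0 else \<gamma>) = \<delta>"
proof -
  have pair: "f a + (f v + (if v \<in> C then 0 else \<gamma>)) = 1"
    if av: "a \<in> A - B" "v \<in> B - A" "a \<le> v \<or> v \<le> a" for a v
  proof (cases "v \<in> C")
    case True
    moreover have "a \<noteq> v" using av by blast
    ultimately show ?thesis using triple_sum[of a v v] le_AB[of a v] av by auto
  next
    case False
    obtain c where c: "c \<in> C" "v \<le> c" using above_B_in_C av(2) by blast
    then have "c \<notin> B" "a \<notin> C" "a \<noteq> v" "a \<noteq> c" "v \<noteq> c"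
      using antichain_eq[of B v c] False av A_Int_C_subset_B by auto
    then show ?thesis
      using triple_sum[of a v c] le_AB[of a v] gamma[of c] c False av by auto
  qed
  obtain \<kappa> where "\<forall>a\<in>A - B. f a = \<kappa>" "\<forall>v\<in>B - A. f v + (if v \<in> C then 0 else \<gamma>) = 1 - \<kappa>"
    using comparability_connected_balance[of "A - B" "B - A" f "\<lambda>v. f v + (if v \<in> C then 0 else \<gamma>)",
        OF connected(1) antichain_Diff antichain_Diff pair] antichains by blast
  then show ?thesis using that[of "1 - \<kappa>"] by simp
qed

lemma gamma_nonneg: "0 \<le> \<gamma>"
  using C_minus_B_nonempty gamma nonneg by blast

end

lemma A_minus_B_below_C_minus_B:
  assumes "B - A \<subseteq> C"
  obtains a c where "a \<in> A - B" "c \<in> C - B" "a \<le> c"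
proof -
  define Z where "Z = (A - B) \<union> (B \<inter> C - A)"
  have "Z \<subseteq> (A - C) \<union> (C - A)" "Z \<noteq> {}" "Z \<noteq> (A - C) \<union> (C - A)"
    using A_Int_C_subset_B B_minus_A_nonempty C_minus_B_nonempty assms unfolding Z_def by blast+
  then obtain u w where u: "u \<in> Z" and w: "w \<in> (A - C) \<union> (C - A) - Z" and "u \<le> w \<or> w \<le> u"
    using comparability_connected_exit[OF connected(3)] by blast
  moreover from this have "u \<in> A - B" "w \<in> C - B"
    using antichain_eq[of A u w] antichain_eq[of B u w] antichain_eq[of C u w]
    unfolding Z_def by blast+
  ultimately show ?thesis using that le_AC by blast
qed

text \<open>The values \<open>\<gamma>\<close> on \<open>C - B\<close> and \<open>1 - \<delta>\<close> on \<open>A - B\<close> are the coefficients of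
  \<open>rho C\<close> and \<open>rho A\<close> in the convex combination representing \<open>f\<close>.\<close>

context
  fixes \<gamma> \<delta> :: real
  assumes gamma: "\<And>c. c \<in> C - B \<Longrightarrow> f c = \<gamma>"
    and delta_A: "\<And>a. a \<in> A - B \<Longrightarrow> f a = 1 - \<delta>"
    and delta_B: "\<And>v. v \<in> B - A \<Longrightarrow> f v + (if v \<in> C then 0 else \<gamma>) = \<delta>"
begin

lemma delta_le_1: "\<delta> \<le> 1"
proof -
  obtain b c where b: "b \<in> B - A" and c: "c \<in> C" "b \<le> c"
    using B_minus_A_nonempty above_B_in_C by blast
  show ?thesis
  proof (cases "b \<in> C")
    case True
    then have "c = b" using antichain_eq[of C b c] c by blast
    then show ?thesis using pair_sum_le[OF c(2)] delta_B[OF b] True by simp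
  next
    case False
    then have "c \<in> C - B" "b \<noteq> c" using antichain_eq[of B b c] b c by blast+
    then show ?thesis using pair_sum_le[OF c(2)] delta_B[OF b] gamma[of c] False by simp
  qed
qed

lemma gamma_le_delta: "\<gamma> \<le> \<delta>"
proof (cases "B - A \<subseteq> C")
  case True
  then obtain a c where "a \<in> A - B" "c \<in> C - B" "a \<le> c"
    by (rule A_minus_B_below_C_minus_B)
  moreover from this have "a \<noteq> c" using A_Int_C_subset_B by blast
  ultimately show ?thesis using pair_sum_le[of a c] delta_A[of a] gamma[of c] by auto
next
  case False
  then obtain v where "v \<in> B - A" "v \<notin> C" by blast
  then show ?thesis using delta_B[of v] nonneg[of v] by simp
qed

lemma decomposition:
  "f i = (1 - \<delta>) * (if i \<in> A then 1 else 0) + (\<delta> - \<gamma>) * (if i \<in> B then 1 else 0)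
     + \<gamma> * (if i \<in> C then 1 else 0)"
  using triple_sum[of i i i] value_on_A_Int_B_minus_C[OF gamma, of i] delta_A[of i] delta_B[of i]
    gamma[of i] support[of i] A_Int_C_subset_B
  by (auto split: if_splits)

end

lemma in_convex_hull: "vec_lambda f \<in> convex hull {rho A, rho B, rho C}"
proof -
  obtain \<gamma> where gamma: "\<And>c. c \<in> C - B \<Longrightarrow> f c = \<gamma>"
    using constant_on_C_minus_B by blast
  obtain \<delta> where delta: "\<And>a. a \<in> A - B \<Longrightarrow> f a = 1 - \<delta>"
    "\<And>v. v \<in> B - A \<Longrightarrow> f v + (if v \<in> C then 0 else \<gamma>) = \<delta>"
    using constant_on_A_minus_B[OF gamma] by blast
  have "vec_lambda f = (1 - \<delta>) *\<^sub>R rho A + (\<delta> - \<gamma>) *\<^sub>R rho B + \<gamma> *\<^sub>R rho C"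
    using decomposition[OF gamma delta] by (simp add: vec_eq_iff)
  moreover have "0 \<le> 1 - \<delta>" "0 \<le> \<delta> - \<gamma>" "0 \<le> \<gamma>"
    using delta_le_1[OF gamma delta] gamma_le_delta[OF gamma delta] gamma_nonneg[OF gamma] by auto
  ultimately show ?thesis
    using convex_hull_3I[of "1 - \<delta>" "\<delta> - \<gamma>" \<gamma>] by simp
qed

end

lemma chain_polytope_2face:
  fixes A B C :: "'a::{finite,order} set"
  assumes antichains: "antichain A" "antichain B" "antichain C"
    and nested: "downset A \<subset> downset B" "downset B \<subset> downset C"
    and connected: "comparability_connected ((A - B) \<union> (B - A))"
      "comparability_connected ((B - C) \<union> (C - B))"
      "comparability_connected ((A - C) \<union> (C - A))"
  shows "is_2face chain_polytope (rho A) (rho B) (rho C)"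
proof -
  have "convex hull {rho A, rho B, rho C} face_of chain_polytope"
  proof (rule face_ofI_open_segment)
    show "convex hull {rho A, rho B, rho C} \<subseteq> chain_polytope"
      using antichains
      by (intro hull_minimal) (auto simp: rho_in_chain_polytope convex_chain_polytope)
    fix a b z
    assume a: "a \<in> chain_polytope" and b: "b \<in> chain_polytope"
      and "z \<in> convex hull {rho A, rho B, rho C}" and segment: "z \<in> open_segment a b"
    then obtain u v w where "u + v + w = 1" and z: "z = u *\<^sub>R rho A + v *\<^sub>R rho B + w *\<^sub>R rho C"
      unfolding convex_hull_3 by blast
    note tight = chain_polytope_open_segment_tight[OF a b segment]
    have "(\<Sum>i\<in>Q. a $ i) = 1"
      if "chain_set Q" "Q \<inter> A \<noteq> {}" "Q \<inter> B \<noteq> {}" "Q \<inter> C \<noteq> {}" for Q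
    proof -
      have "card (Q \<inter> X) = 1" if "antichain X" "Q \<inter> X \<noteq> {}" for X
        using card_chain_Int_antichain[OF \<open>chain_set Q\<close> that(1)] that(2)
        by (simp add: le_Suc_eq card_gt_0_iff)
      then have "(\<Sum>i\<in>Q. z $ i) = 1"
        using that antichains \<open>u + v + w = 1\<close>
        by (simp add: z sum.distrib sum.If_cases flip: sum_distrib_left)
      moreover have "Q \<noteq> {}" using that(2) by blast
      ultimately show ?thesis using tight(2) \<open>chain_set Q\<close> by blast
    qed
    moreover have "a $ i = 0" if "i \<notin> A \<union> B \<union> C" for i
    proof (rule tight(1))
      show "z $ i = 0" using that by (simp add: z)
    qed
    ultimately interpret chain_triangle_tight A B C "\<lambda>i. a $ i"
      using assms a unfolding chain_polytope_def by unfold_locales auto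
    show "a \<in> convex hull {rho A, rho B, rho C}"
      using in_convex_hull by simp
  qed simp
  moreover have "A \<noteq> B" "B \<noteq> C" "A \<noteq> C" using nested by auto
  ultimately show ?thesis by (intro is_2face_rhoI) auto
qed

lemma comparable_triple_sorted:
  assumes "I \<noteq> J" "J \<noteq> K" "I \<noteq> K"
    and "I \<subseteq> J \<or> J \<subseteq> I" "J \<subseteq> K \<or> K \<subseteq> J" "I \<subseteq> K \<or> K \<subseteq> I"
  obtains X Y Z where "{I, J, K} = {X, Y, Z}" "X \<subset> Y" "Y \<subset> Z"
  using that[of I J K] that[of I K J] that[of J I K] that[of J K I] that[of K I J] that[of K J I]
    assms
  by (auto simp: insert_commute)

lemma not_in_DeltaO_star:
  fixes T :: "'a::{finite,order} set set"
  assumes "\<And>I J. I \<in> T \<Longrightarrow> J \<in> T \<Longrightarrow> I \<noteq> J \<Longrightarrow> is_edge chain_polytope (rho (maxel I)) (rho (maxel J))"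
  shows "T \<notin> DeltaO_star"
  using assms unfolding DeltaO_star_def EO_star_def by (auto simp: doubleton_eq_iff)

lemma not_in_DeltaC_star:
  fixes T :: "'a::{finite,order} set set"
  assumes "\<And>A B. A \<in> T \<Longrightarrow> B \<in> T \<Longrightarrow> A \<noteq> B \<Longrightarrow> is_edge order_polytope (rho (downset A)) (rho (downset B))"
  shows "T \<notin> DeltaC_star"
  using assms unfolding DeltaC_star_def EC_star_def by (auto simp: doubleton_eq_iff)

lemma DeltaO_edge:
  assumes "T \<in> DeltaO" "I \<in> T" "J \<in> T" "I \<noteq> J"
  shows "poset_ideal I" "is_edge order_polytope (rho I) (rho J)"
  using assms is_2face_rho_edge unfolding DeltaO_def by blast+

lemma DeltaC_edge:
  assumes "T \<in> DeltaC" "A \<in> T" "B \<in> T" "A \<noteq> B"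
  shows "antichain A" "is_edge chain_polytope (rho A) (rho B)"
  using assms is_2face_rho_edge unfolding DeltaC_def by blast+

lemma DeltaO_minus_star_edge:
  assumes "T \<in> DeltaO - DeltaO_star" "I \<in> T" "J \<in> T" "I \<noteq> J"
  shows "is_edge chain_polytope (rho (maxel I)) (rho (maxel J))"
proof (rule ccontr)
  assume "\<not> ?thesis"
  moreover have "T \<in> DeltaO" using assms(1) by blast
  then have "poset_ideal I" "poset_ideal J" "is_edge order_polytope (rho I) (rho J)"
    using DeltaO_edge[of T I J] DeltaO_edge[of T J I] assms(2-4) by auto
  ultimately have "{I, J} \<in> EO_star"
    using assms(4) unfolding EO_star_def by blast
  then show False using assms unfolding DeltaO_star_def by blast
qed

lemma DeltaC_minus_star_edge:
  assumes "T \<in> DeltaC - DeltaC_star" "A \<in> T" "B \<in> T" "A \<noteq> B"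
  shows "is_edge order_polytope (rho (downset A)) (rho (downset B))"
proof (rule ccontr)
  assume "\<not> ?thesis"
  moreover have "T \<in> DeltaC" using assms(1) by blast
  then have "antichain A" "antichain B" "is_edge chain_polytope (rho A) (rho B)"
    using DeltaC_edge[of T A B] DeltaC_edge[of T B A] assms(2-4) by auto
  ultimately have "{A, B} \<in> EC_star"
    using assms(4) unfolding EC_star_def by blast
  then show False using assms unfolding DeltaC_star_def by blast
qed

lemma ideal_triangle_sorted:
  fixes I J K :: "'a::{finite,order} set"
  assumes "poset_ideal I" "poset_ideal J" "poset_ideal K" "I \<noteq> J" "J \<noteq> K" "I \<noteq> K"
    and edge: "\<And>U V. U \<in> {I, J, K} \<Longrightarrow> V \<in> {I, J, K} \<Longrightarrow> U \<noteq> V \<Longrightarrow>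
      is_edge order_polytope (rho U) (rho V)"
  shows "\<exists>X Y Z. {I, J, K} = {X, Y, Z} \<and> X \<subset> Y \<and> Y \<subset> Z \<and>
    comparability_connected (Y - X) \<and> comparability_connected (Z - Y) \<and>
    comparability_connected (Z - X)"
proof -
  have nested: "U \<subseteq> V \<and> comparability_connected (V - U) \<or> V \<subseteq> U \<and> comparability_connected (U - V)"
    if "U \<in> {I, J, K}" "V \<in> {I, J, K}" "U \<noteq> V" for U V
    using order_polytope_edge_nested[OF _ _ edge[OF that]] that assms(1-3) by blast
  have "I \<subseteq> J \<or> J \<subseteq> I" "J \<subseteq> K \<or> K \<subseteq> J" "I \<subseteq> K \<or> K \<subseteq> I"
    using nested[of I J] nested[of J K] nested[of I K] assms(4-6) by auto
  then obtain X Y Z where XYZ: "{I, J, K} = {X, Y, Z}" "X \<subset> Y" "Y \<subset> Z"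
    using comparable_triple_sorted[OF assms(4-6)] by blast
  moreover have "X \<in> {I, J, K}" "Y \<in> {I, J, K}" "Z \<in> {I, J, K}"
    unfolding XYZ(1) by simp_all
  ultimately have "comparability_connected (Y - X)" "comparability_connected (Z - Y)"
    "comparability_connected (Z - X)"
    using nested[of X Y] nested[of Y Z] nested[of X Z] by auto
  then show ?thesis using XYZ by blast
qed

lemma maxel_image_DeltaO:
  fixes T :: "'a::{finite,order} set set"
  assumes T: "T \<in> DeltaO - DeltaO_star"
  shows "maxel ` T \<in> DeltaC - DeltaC_star"
proof -
  obtain I J K where IJK: "T = {I, J, K}" "poset_ideal I" "poset_ideal J" "poset_ideal K"
    "I \<noteq> J" "J \<noteq> K" "I \<noteq> K"
    using T unfolding DeltaO_def by blast
  have edge: "is_edge order_polytope (rho U) (rho V)" if "U \<in> T" "V \<in> T" "U \<noteq> V" for U V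
    using DeltaO_edge(2) T that by blast
  then have "is_edge order_polytope (rho U) (rho V)"
    if "U \<in> {I, J, K}" "V \<in> {I, J, K}" "U \<noteq> V" for U V
    using that IJK(1) by blast
  then obtain X Y Z where "{I, J, K} = {X, Y, Z}" and XY: "X \<subset> Y" and YZ: "Y \<subset> Z"
    using ideal_triangle_sorted[OF IJK(2-7)] by blast
  then have XYZ: "T = {X, Y, Z}" using IJK(1) by simp
  have down: "downset (maxel U) = U" if "U \<in> T" for U
    using downset_maxel IJK that by blast
  have conn: "comparability_connected ((maxel U - maxel V) \<union> (maxel V - maxel U))"
    if "U \<in> T" "V \<in> T" "U \<noteq> V" for U V
    using chain_polytope_edge_connected[OF antichain_maxel antichain_maxel]
      DeltaO_minus_star_edge[OF T that] .
  have "downset (maxel X) \<subset> downset (maxel Y)" "downset (maxel Y) \<subset> downset (maxel Z)"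
    using down XYZ XY YZ by simp_all
  then have "is_2face chain_polytope (rho (maxel X)) (rho (maxel Y)) (rho (maxel Z))"
    using conn XYZ XY YZ by (intro chain_polytope_2face antichain_maxel) auto
  moreover have "maxel X \<noteq> maxel Y" "maxel Y \<noteq> maxel Z" "maxel X \<noteq> maxel Z"
    using \<open>downset (maxel X) \<subset> downset (maxel Y)\<close> \<open>downset (maxel Y) \<subset> downset (maxel Z)\<close>
    by auto
  ultimately have "maxel ` T \<in> DeltaC"
    unfolding DeltaC_def XYZ image_insert image_empty by (blast intro: antichain_maxel)
  moreover have "maxel ` T \<notin> DeltaC_star"
  proof (rule not_in_DeltaC_star)
    fix A B assume "A \<in> maxel ` T" "B \<in> maxel ` T" "A \<noteq> B"
    then obtain U V where "U \<in> T" "V \<in> T" "U \<noteq> V" "A = maxel U" "B = maxel V" by blast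
    then show "is_edge order_polytope (rho (downset A)) (rho (downset B))"
      using edge down by simp
  qed
  ultimately show ?thesis by blast
qed

lemma downset_image_DeltaC:
  fixes T :: "'a::{finite,order} set set"
  assumes T: "T \<in> DeltaC - DeltaC_star"
  shows "downset ` T \<in> DeltaO - DeltaO_star"
proof -
  obtain A B C where ABC: "T = {A, B, C}" "antichain A" "antichain B" "antichain C"
    "A \<noteq> B" "B \<noteq> C" "A \<noteq> C"
    using T unfolding DeltaC_def by blast
  have max: "maxel (downset U) = U" if "U \<in> T" for U
    using maxel_downset ABC that by blast
  have distinct: "downset U \<noteq> downset V" if "U \<in> T" "V \<in> T" "U \<noteq> V" for U V
    using max[OF that(1)] max[OF that(2)] that(3) by metis
  have "is_edge order_polytope (rho P) (rho Q)"
    if "P \<in> downset ` T" "Q \<in> downset ` T" "P \<noteq> Q" for P Q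
    using that DeltaC_minus_star_edge[OF T] by blast
  then obtain X Y Z where "downset ` T = {X, Y, Z}" "X \<subset> Y" "Y \<subset> Z"
    "comparability_connected (Y - X)" "comparability_connected (Z - Y)"
    "comparability_connected (Z - X)"
    using ideal_triangle_sorted[OF poset_ideal_downset poset_ideal_downset poset_ideal_downset,
        of A B C] distinct ABC(1,5-7) by auto
  moreover from this have "poset_ideal X" "poset_ideal Y" "poset_ideal Z"
    using poset_ideal_downset by (metis imageE insertCI)+
  ultimately have "downset ` T \<in> DeltaO"
    unfolding DeltaO_def by (blast intro: order_polytope_2face)
  moreover have "downset ` T \<notin> DeltaO_star"
  proof (rule not_in_DeltaO_star)
    fix I J assume "I \<in> downset ` T" "J \<in> downset ` T" "I \<noteq> J"
    then obtain U V where "U \<in> T" "V \<in> T" "U \<noteq> V" "I = downset U" "J = downset V" by blast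
    then show "is_edge chain_polytope (rho (maxel I)) (rho (maxel J))"
      using DeltaC_edge(2)[of T U V] T max by simp
  qed
  ultimately show ?thesis by blast
qed

theorem lemma3p3:
  shows "card ((DeltaO :: 'a::{finite,order} set set set) - DeltaO_star) =
         card ((DeltaC :: 'a set set set) - DeltaC_star)"
proof (rule bij_betw_same_card[of "image maxel"],
    rule bij_betw_byWitness[where f' = "image downset"])
  show "\<forall>T \<in> DeltaO - DeltaO_star. downset ` maxel ` T = T"
    using downset_maxel unfolding DeltaO_def by (fastforce simp: image_image)
  show "\<forall>T \<in> DeltaC - DeltaC_star. maxel ` downset ` T = T"
    using maxel_downset unfolding DeltaC_def by (fastforce simp: image_image)
qed (use maxel_image_DeltaO downset_image_DeltaC in blast)+

end
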